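(* Let $\tilde s\mathbf{[x](z,Z)}\to \tilde t\mathbf{[x](z,Z)}$ be a non-trivial $\mathcal L$-justification of $a\to b \mathrel{:\!\cdot} c\to d$ in $(\mathfrak{A,B})$. (1) If, for all $\sigma_\mathfrak B\in g\text-Sub(\mathcal{L,L_\mathfrak B})$, $c^\mathfrak B=(\tilde s\sigma_\mathfrak B)^\mathfrak B$ implies $d^\mathfrak B=(\tilde t\sigma_\mathfrak B)^\mathfrak B$, then $\tilde s\to \tilde t$ is a characteristic $\mathcal L$-justification of $a\to b\mathrel{:\!\cdot} c\to d$ in $(\mathfrak{A,B})$, that is, $(\mathfrak{A,B})\models a\to b\mathrel{:\!\cdot} c\to d$. (2) Consequently, if $c^\mathfrak B=(\tilde s\sigma_\mathfrak B)^\mathfrak B$ iff $d^\mathfrak B=(\tilde s\sigma_\mathfrak B)^\mathfrak B$ for all $\sigma_\mathfrak B\in g\text-Sub(\mathcal{L,L_\mathfrak B})$, and every $\mathcal Z$-variable in $\tilde s$ occurs in $\tilde t$, then $(\mathfrak{A,B})\models a\to b\mathrel{:\!\cdot} c\to d$ and $(\mathfrak{A,B})\models b\to a\mathrel{:\!\cdot} d\to c$. (3) Consequently, if $a^\mathfrak A=(\tilde s\sigma_\mathfrak A)^\mathfrak A$ iff $b^\mathfrak A=(\tilde t\sigma_\mathfrak A)^\mathfrak B$, and $c^\mathfrak B=(\tilde s\sigma_\mathfrak B)^\mathfrak B$ iff $d^\mathfrak B=(\tilde t\sigma_\mathfrak B)^\mathfrak B$, for all $\sigma_\mathfrak A\in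 g\text-Sub(\mathcal{L,L_\mathfrak A})$ and $\sigma_\mathfrak B\in g\text-Sub(\mathcal{L,L_\mathfrak B})$, and every $\mathcal Z$-variable in $\tilde s$ occurs in $\tilde t$, then $(\mathfrak{A,B})\models a:b::c:d$.
   Context: $\mathfrak A$ is an algebra over $\mathcal L_\mathfrak A=\{\dot f_i\mid i\in I\}$ and $\mathfrak B$ an algebra over $\mathcal L_\mathfrak B=\{\dot g_i\mid i\in I\}$ (same index set $I$). $\mathcal L=\{\dot h_i\mid i\in I\}$ with $r_\mathcal L(\dot h_i)=\max\{r(\dot f_i),r(\dot g_i)\}$. Variables: $\mathcal X$-variables $x$ (placeholders for constant symbols), $\mathcal Z$-variables $z$, and hedge variables $Z\in\mathscr Z$ which may be replaced by the empty hedge $\dot\lambda$ (so $\dot h(\dot a,\dot\lambda)$ means $\dot h(\dot a)$). An $\mathcal L$-hedge is an $\mathcal L$-term over these variables; abstract means no constant symbols. A ground $(\mathcal{L,L_\mathfrak A})$-substitution $\sigma_\mathfrak A$ maps each $\dot h_i\mapsto\dot f_i$, $\mathcal X$-variables to constant symbols of $\mathcal L_\mathfrak A$, $\mathcal Z$-variables to ground $\mathcal L_\mathfrak A$-terms and hedge variables to ground $\mathcal L_\mathfrak A$-terms or $\dot\lambda$; $g\text-Sub(\mathcal{L,L_\mathfrak A})$ is the set of these (similarly for $\mathfrak B$). An $\mathcal L$-justification is $\tilde s\to\tilde t$ with $\tilde s,\tilde t$ abstract $\mathcal L$-hedges and every $\mathcal Z$-variable of $\tilde t$ occurring in $\tilde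 s$. For ground terms $a,b$ (of $\mathcal L_\mathfrak A$) and $c,d$ (of $\mathcal L_\mathfrak B$), $Jus_\mathfrak A(a\to b)$ is the set of justifications with $a^\mathfrak A=(\tilde s\sigma_\mathfrak A)^\mathfrak A$, $b^\mathfrak A=(\tilde t\sigma_\mathfrak A)^\mathfrak A$ for some $\sigma_\mathfrak A$; $Jus_{(\mathfrak{A,B})}(a\to b\mathrel{:\!\cdot} c\to d)$ is the set of justifications for which there are $\sigma_\mathfrak A,\sigma_\mathfrak B$ agreeing on $\mathcal X$ with $a^\mathfrak A\to b^\mathfrak A=(\tilde s\sigma_\mathfrak A)^\mathfrak A\to(\tilde t\sigma_\mathfrak A)^\mathfrak A$ and $c^\mathfrak B\to d^\mathfrak B=(\tilde s\sigma_\mathfrak B)^\mathfrak B\to(\tilde t\sigma_\mathfrak B)^\mathfrak B$. A justification is trivial if it lies in every $Jus_\mathfrak A(a\to b)$ and every $Jus_\mathfrak B(c\to d)$. $(\mathfrak{A,B})\models a\to b\mathrel{:\!\cdot} c\to d$ iff either $Jus_\mathfrak A(a\to b)\cup Jus_\mathfrak B(c\to d)$ contains only trivial justifications, or $Jus_{(\mathfrak{A,B})}(a\to b\mathrel{:\!\cdot} c\to d)$ contains a non-trivial justification and is maximal under inclusion among the sets $Jus_{(\mathfrak{A,B})}(a\to b\mathrel{:\!\cdot} c\to d')$ ($d'$ ground, ${d'}^\mathfrak B\neq d^\mathfrak B$) containing a non-trivial justification. $(\mathfrak{A,B})\models a:b::c:d$ iff $a\to b\mathrel{:\!\cdot} c\to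 d$, $b\to a\mathrel{:\!\cdot} d\to c$, $c\to d\mathrel{:\!\cdot} a\to b$, $d\to c\mathrel{:\!\cdot} b\to a$ all hold. A set $J$ is characteristic for $a\to b\mathrel{:\!\cdot} c\to d$ if $J\subseteq Jus_{(\mathfrak{A,B})}(a\to b\mathrel{:\!\cdot} c\to d)$ and $J\subseteq Jus_{(\mathfrak{A,B})}(a\to b\mathrel{:\!\cdot} c\to d')$ implies $d'=d$; a characteristic justification is a singleton such $J$. *)

theory Defs
  imports Main
begin

text \<open>The symbols of L_A, L_B and L are all indexed by the same type 'i:
  index i stands for f_i, g_i, h_i respectively.\<close>

datatype 'i gterm = GApp 'i "'i gterm list"

type_synonym ('i, 'a) alg = "('i \<Rightarrow> nat) \<times> ('i \<Rightarrow> 'a list \<Rightarrow> 'a)"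

definition ar :: "('i, 'a) alg \<Rightarrow> 'i \<Rightarrow> nat" where "ar A = fst A"
definition op :: "('i, 'a) alg \<Rightarrow> 'i \<Rightarrow> 'a list \<Rightarrow> 'a" where "op A = snd A"

fun gwf :: "('i, 'a) alg \<Rightarrow> 'i gterm \<Rightarrow> bool" where
  "gwf A (GApp i ts) = (length ts = ar A i \<and> (\<forall>t\<in>set ts. gwf A t))"

fun geval :: "('i, 'a) alg \<Rightarrow> 'i gterm \<Rightarrow> 'a" where
  "geval A (GApp i ts) = op A i (map (geval A) ts)"

text \<open>XV: X-variables, ZV: Z-variables, HV: hedge variables, Sym i: the symbol h_i\<close>
datatype 'i hedge = XV nat | ZV nat | HV nat | Sym 'i "'i hedge list"

definition arL :: "('i, 'a) alg \<Rightarrow> ('i, 'b) alg \<Rightarrow> 'i \<Rightarrow> nat" where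
  "arL A B i = max (ar A i) (ar B i)"

fun hwf :: "('i \<Rightarrow> nat) \<Rightarrow> 'i hedge \<Rightarrow> bool" where
  "hwf r (Sym i ss) = (length ss = r i \<and> (\<forall>s\<in>set ss. hwf r s))"
| "hwf r _ = True"

fun habstract :: "('i \<Rightarrow> nat) \<Rightarrow> 'i hedge \<Rightarrow> bool" where
  "habstract r (Sym i ss) = (r i \<noteq> 0 \<and> (\<forall>s\<in>set ss. habstract r s))"
| "habstract r _ = True"

fun zvars :: "'i hedge \<Rightarrow> nat set" where
  "zvars (ZV z) = {z}"
| "zvars (Sym i ss) = (\<Union>s\<in>set ss. zvars s)"
| "zvars _ = {}"

text \<open>A ground substitution: X-variables to (indices of) constant symbols,
  Z-variables to ground terms, hedge variables to ground terms or the empty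
  hedge (None); h_i is mapped to f_i implicitly.\<close>
type_synonym 'i gsubst = "(nat \<Rightarrow> 'i) \<times> (nat \<Rightarrow> 'i gterm) \<times> (nat \<Rightarrow> 'i gterm option)"

definition gSub :: "('i, 'a) alg \<Rightarrow> 'i gsubst set" where
  "gSub A = {(sx, sz, sh). (\<forall>x. ar A (sx x) = 0) \<and> (\<forall>z. gwf A (sz z))
                          \<and> (\<forall>h t. sh h = Some t \<longrightarrow> gwf A t)}"

fun inst :: "'i gsubst \<Rightarrow> 'i hedge \<Rightarrow> 'i gterm list" where
  "inst (sx, sz, sh) (XV x) = [GApp (sx x) []]"
| "inst (sx, sz, sh) (ZV z) = [sz z]"
| "inst (sx, sz, sh) (HV h) = (case sh h of None \<Rightarrow> [] | Some t \<Rightarrow> [t])"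
| "inst \<sigma> (Sym i ss) = [GApp i (concat (map (inst \<sigma>) ss))]"

definition evals :: "('i, 'a) alg \<Rightarrow> 'i hedge \<Rightarrow> 'i gsubst \<Rightarrow> 'a \<Rightarrow> bool" where
  "evals A s \<sigma> e = (\<exists>u. inst \<sigma> s = [u] \<and> gwf A u \<and> geval A u = e)"

definition is_just :: "('i, 'a) alg \<Rightarrow> ('i, 'b) alg \<Rightarrow> 'i hedge \<times> 'i hedge \<Rightarrow> bool" where
  "is_just A B j = (hwf (arL A B) (fst j) \<and> hwf (arL A B) (snd j)
      \<and> habstract (arL A B) (fst j) \<and> habstract (arL A B) (snd j)
      \<and> zvars (snd j) \<subseteq> zvars (fst j))"

definition Jus1 :: "('i, 'a) alg \<Rightarrow> ('i, 'b) alg \<Rightarrow> 'i gterm \<Rightarrow> 'i gterm \<Rightarrow> ('i hedge \<times> 'i hedge) set" where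
  "Jus1 A B a b = {(s, t). is_just A B (s, t) \<and>
      (\<exists>\<sigma>\<in>gSub A. evals A s \<sigma> (geval A a) \<and> evals A t \<sigma> (geval A b))}"

definition Jus2 :: "('i, 'a) alg \<Rightarrow> ('i, 'b) alg \<Rightarrow> 'i gterm \<Rightarrow> 'i gterm \<Rightarrow> 'i gterm \<Rightarrow> 'i gterm
                    \<Rightarrow> ('i hedge \<times> 'i hedge) set" where
  "Jus2 A B a b c d = {(s, t). is_just A B (s, t) \<and>
      (\<exists>\<sigma>A\<in>gSub A. \<exists>\<sigma>B\<in>gSub B. fst \<sigma>A = fst \<sigma>B \<and>
          evals A s \<sigma>A (geval A a) \<and> evals A t \<sigma>A (geval A b) \<and>
          evals B s \<sigma>B (geval B c) \<and> evals B t \<sigma>B (geval B d))}"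

definition trivial :: "('i, 'a) alg \<Rightarrow> ('i, 'b) alg \<Rightarrow> 'i hedge \<times> 'i hedge \<Rightarrow> bool" where
  "trivial A B j = ((\<forall>a b. gwf A a \<and> gwf A b \<longrightarrow> j \<in> Jus1 A B a b) \<and>
                    (\<forall>c d. gwf B c \<and> gwf B d \<longrightarrow> j \<in> Jus1 B A c d))"

definition models :: "('i, 'a) alg \<Rightarrow> ('i, 'b) alg \<Rightarrow> 'i gterm \<Rightarrow> 'i gterm \<Rightarrow> 'i gterm \<Rightarrow> 'i gterm \<Rightarrow> bool" where
  "models A B a b c d =
     ((\<forall>j\<in>Jus1 A B a b \<union> Jus1 B A c d. trivial A B j) \<or>
      ((\<exists>j\<in>Jus2 A B a b c d. \<not> trivial A B j) \<and>
       \<not> (\<exists>d'. gwf B d' \<and> geval B d' \<noteq> geval B d \<and>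
              (\<exists>j\<in>Jus2 A B a b c d'. \<not> trivial A B j) \<and>
              Jus2 A B a b c d \<subset> Jus2 A B a b c d')))"

text \<open>(A,B) \<Turnstile> a : b :: c : d ; the last two relations are read in (B,A)\<close>
definition analogy :: "('i, 'a) alg \<Rightarrow> ('i, 'b) alg \<Rightarrow> 'i gterm \<Rightarrow> 'i gterm \<Rightarrow> 'i gterm \<Rightarrow> 'i gterm \<Rightarrow> bool" where
  "analogy A B a b c d = (models A B a b c d \<and> models A B b a d c \<and>
                          models B A c d a b \<and> models B A d c b a)"

definition characteristic :: "('i, 'a) alg \<Rightarrow> ('i, 'b) alg \<Rightarrow> 'i gterm \<Rightarrow> 'i gterm \<Rightarrow> 'i gterm \<Rightarrow> 'i gterm
                              \<Rightarrow> ('i hedge \<times> 'i hedge) set \<Rightarrow> bool" where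
  "characteristic A B a b c d J = (J \<subseteq> Jus2 A B a b c d \<and>
      (\<forall>d'. gwf B d' \<and> J \<subseteq> Jus2 A B a b c d' \<longrightarrow> geval B d' = geval B d))"

end

theory Submission
  imports Defs
begin

text \<open>A justification determines its target uniquely once the source value fixes the substitution:
  if every ground substitution producing c from s produces d from t, then any d' justified by
  s \<rightarrow> t has the same value as d. Hence the singleton {s \<rightarrow> t} is characteristic, and since
  every strictly larger justification set Jus(a \<rightarrow> b :. c \<rightarrow> d') would still contain s \<rightarrow> t,
  no d' of different value can beat d, which is maximality. Parts (2) and (3) follow by
  applying this to the reversed justification t \<rightarrow> s (allowed because s and t have the same
  Z-variables) and to the pair (B, A).\<close>

lemma evals_unique: "evals A s \<sigma> e \<Longrightarrow> evals A s \<sigma> e' \<Longrightarrow> e = e'"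
  unfolding evals_def by auto

lemma is_just_sym: "is_just B A j = is_just A B j"
  unfolding is_just_def arL_def by (simp add: max.commute)

lemma is_just_converse:
  "is_just A B (s, t) \<Longrightarrow> zvars s \<subseteq> zvars t \<Longrightarrow> is_just A B (t, s)"
  unfolding is_just_def by auto

lemma trivial_sym: "trivial B A j = trivial A B j"
  unfolding trivial_def by blast

lemma Jus1_converse:
  assumes "is_just A B (s, t)" and "is_just A B (t, s)"
  shows "(t, s) \<in> Jus1 A B a b \<longleftrightarrow> (s, t) \<in> Jus1 A B b a"
  using assms unfolding Jus1_def by auto

lemma trivial_converse:
  assumes "is_just A B (s, t)" and "zvars s \<subseteq> zvars t"
  shows "trivial A B (t, s) = trivial A B (s, t)"
proof -
  have ts: "is_just A B (t, s)"
    using assms by (rule is_just_converse)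
  have "(t, s) \<in> Jus1 A B a b \<longleftrightarrow> (s, t) \<in> Jus1 A B b a" for a b
    using assms(1) ts by (rule Jus1_converse)
  moreover have "(t, s) \<in> Jus1 B A c d \<longleftrightarrow> (s, t) \<in> Jus1 B A d c" for c d
    using assms(1) ts by (intro Jus1_converse) (simp_all add: is_just_sym[of A B])
  ultimately show ?thesis
    unfolding trivial_def by blast
qed

lemma Jus2_sym: "(s, t) \<in> Jus2 A B a b c d \<Longrightarrow> (s, t) \<in> Jus2 B A c d a b"
  unfolding Jus2_def by (auto simp: is_just_sym[of A B]) (metis fst_conv)

lemma Jus2_converse:
  "(s, t) \<in> Jus2 A B a b c d \<Longrightarrow> zvars s \<subseteq> zvars t \<Longrightarrow> (t, s) \<in> Jus2 A B b a d c"
  unfolding Jus2_def using is_just_converse by blast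

lemma models_if_characteristic:
  assumes "characteristic A B a b c d J" and "j \<in> Jus2 A B a b c d" and "\<not> trivial A B j"
  shows "models A B a b c d"
proof -
  have "geval B d' = geval B d"
    if "gwf B d'" and "Jus2 A B a b c d \<subset> Jus2 A B a b c d'" for d'
    using assms(1) that unfolding characteristic_def by blast
  then show ?thesis
    using assms(2,3) unfolding models_def by blast
qed

lemma characteristic_singleton:
  assumes J: "(s, t) \<in> Jus2 A B a b c d"
    and det: "\<forall>\<sigma>B\<in>gSub B. evals B s \<sigma>B (geval B c) \<longrightarrow> evals B t \<sigma>B (geval B d)"
  shows "characteristic A B a b c d {(s, t)}"
  unfolding characteristic_def
proof (intro conjI allI impI)
  show "{(s, t)} \<subseteq> Jus2 A B a b c d"
    using J by simp
next
  fix d' assume "gwf B d' \<and> {(s, t)} \<subseteq> Jus2 A B a b c d'"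
  then obtain \<sigma>B where "\<sigma>B \<in> gSub B" "evals B s \<sigma>B (geval B c)" "evals B t \<sigma>B (geval B d')"
    unfolding Jus2_def by auto
  with det show "geval B d' = geval B d"
    using evals_unique by metis
qed

lemma models_if_determines:
  assumes "(s, t) \<in> Jus2 A B a b c d" and "\<not> trivial A B (s, t)"
    and "\<forall>\<sigma>B\<in>gSub B. evals B s \<sigma>B (geval B c) \<longrightarrow> evals B t \<sigma>B (geval B d)"
  shows "models A B a b c d"
  using characteristic_singleton[OF assms(1,3)] assms(1,2) by (rule models_if_characteristic)

lemma models_and_converse_if_determines_iff:
  assumes J: "(s, t) \<in> Jus2 A B a b c d" and nt: "\<not> trivial A B (s, t)"
    and det: "\<forall>\<sigma>B\<in>gSub B. evals B s \<sigma>B (geval B c) \<longleftrightarrow> evals B t \<sigma>B (geval B d)"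
    and zv: "zvars s \<subseteq> zvars t"
  shows "models A B a b c d \<and> models A B b a d c"
proof
  show "models A B a b c d"
    using det by (intro models_if_determines[OF J nt]) blast
  have "is_just A B (s, t)"
    using J unfolding Jus2_def by blast
  then have nt_ts: "\<not> trivial A B (t, s)"
    using nt trivial_converse[OF _ zv] by blast
  show "models A B b a d c"
    using Jus2_converse[OF J zv] nt_ts by (rule models_if_determines) (use det in blast)
qed

theorem mainTheorem1:
  fixes A :: "('i, 'a) alg" and B :: "('i, 'b) alg"
    and a b c d :: "'i gterm" and s t :: "'i hedge"
  assumes "gwf A a" and "gwf A b" and "gwf B c" and "gwf B d"
    and "(s, t) \<in> Jus2 A B a b c d" and "\<not> trivial A B (s, t)"
  shows "((\<forall>\<sigma>B\<in>gSub B. evals B s \<sigma>B (geval B c) \<longrightarrow> evals B t \<sigma>B (geval B d)) \<longrightarrow>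
            characteristic A B a b c d {(s, t)} \<and> models A B a b c d)
       \<and> ((\<forall>\<sigma>B\<in>gSub B. evals B s \<sigma>B (geval B c) \<longleftrightarrow> evals B t \<sigma>B (geval B d)) \<and>
           zvars s \<subseteq> zvars t \<longrightarrow>
            models A B a b c d \<and> models A B b a d c)
       \<and> ((\<forall>\<sigma>A\<in>gSub A. evals A s \<sigma>A (geval A a) \<longleftrightarrow> evals A t \<sigma>A (geval A b)) \<and>
           (\<forall>\<sigma>B\<in>gSub B. evals B s \<sigma>B (geval B c) \<longleftrightarrow> evals B t \<sigma>B (geval B d)) \<and>
           zvars s \<subseteq> zvars t \<longrightarrow>
            analogy A B a b c d)"
proof -
  note J = assms(5) and nt = assms(6)
  have J_sym: "(s, t) \<in> Jus2 B A c d a b" and nt_sym: "\<not> trivial B A (s, t)"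
    using Jus2_sym[OF J] nt by (simp_all add: trivial_sym[of A B])
  show ?thesis
    unfolding analogy_def
    using characteristic_singleton[OF J] models_if_determines[OF J nt]
      models_and_converse_if_determines_iff[OF J nt]
      models_and_converse_if_determines_iff[OF J_sym nt_sym]
    by blast
qed

end
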